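(* Let $\mathcal{P}=[0,1]^n\cap K$ be a polytope, where $K$ is an affine subspace of $\mathbb{R}^n$, with vertex set $V(\mathcal{P})$. For vertices $v,w\in V(\mathcal{P})$ let $g^{(w)}_v:\mathcal{P}\to[0,1]$ be the coefficient of $v$ in the convex decomposition of $p$ induced by the fan triangulation $\mathcal{T}_w$, and let $$f_v(p)=\frac{1}{|V(\mathcal{P})|}\sum_{w\in V(\mathcal{P})}g^{(w)}_v(p).$$ Then each $f_v$ is polynomially bounded on $\mathcal{P}$.
   Context: Let $d=\dim\mathcal{P}$. For a vertex $w$, the fan triangulation $\mathcal{T}_w$ of $\mathcal{P}$ is the subdivision of $\mathcal{P}$ into simplices with disjoint interiors obtained by first triangulating (arbitrarily) each facet of $\mathcal{P}$ not containing $w$ into $(d-1)$-dimensional simplices (when a facet has more than $d$ vertices), and then taking the convex hull of $w$ with each such $(d-1)$-simplex. Each $p\in\mathcal{P}$ lies in some simplex $T$ of $\mathcal{T}_w$ and has a unique representation as a convex combination of the vertices of $T$; assigning coefficient $0$ to vertices of $\mathcal{P}$ not in $T$ gives a convex decomposition of $p$ into vertices of $\mathcal{P}$ (these agree on common faces of simplices), and $g^{(w)}_v(p)$ is the coefficient of $v$ in it. For a partition $[n]=A\sqcup S\sqcup B$, the open face is $F_{A,S,B}=\{p\in[0,1]^n: p_i=0\ (i\in A),\ 0<p_i<1\ (i\in S),\ p_i=1\ (i\in B)\}$. For $T\subseteq[n]$, $p^T=\prod_{i\in T}p_i$, $(1-p)^T=\prod_{i\in T}(1-p_i)$. A function $h:\mathcal{P}\to[0,1]$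 is polynomially bounded on $\mathcal{P}$ if there exist an integer $m\ge0$ and a real $c>0$ such that for every open face $F_{A,S,B}$: if some $q\in\mathcal{P}\cap F_{A,S,B}$ has $h(q)>0$, then $h(p)\ge c\left((1-p)^A p^S(1-p)^S p^B\right)^m$ for all $p\in\mathcal{P}$. *)

theory Defs
  imports "HOL-Analysis.Analysis"
begin

definition cube_poly :: "(real^'n) set \<Rightarrow> (real^'n) set" where
  "cube_poly K = {x. \<forall>i. 0 \<le> x$i \<and> x$i \<le> 1} \<inter> K"

definition verts :: "(real^'n) set \<Rightarrow> (real^'n) set" where
  "verts P = {v. v extreme_point_of P}"

definition facet_triangulation ::
  "(real^'n) set \<Rightarrow> (real^'n) set \<Rightarrow> (real^'n) set set \<Rightarrow> bool" where
  "facet_triangulation P F \<D> \<longleftrightarrow>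
     finite \<D> \<and>
     (\<forall>D\<in>\<D>. D \<subseteq> verts P \<inter> F \<and> \<not> affine_dependent D \<and>
              aff_dim (convex hull D) = aff_dim F) \<and>
     \<Union>((\<lambda>D. convex hull D) ` \<D>) = F \<and>
     (\<forall>D1\<in>\<D>. \<forall>D2\<in>\<D>. D1 \<noteq> D2 \<longrightarrow>
        rel_interior (convex hull D1) \<inter> rel_interior (convex hull D2) = {})"

text \<open>Vertex sets of the simplices of the fan triangulation T_w, given the chosen
  triangulations tri F of the facets F not containing w.  (Degenerate case d = 0,
  where P = {w} has no facets: T_w consists of the single 0-simplex {w}.)\<close>
definition fan_simplices ::
  "(real^'n) set \<Rightarrow> ((real^'n) set \<Rightarrow> (real^'n) set set) \<Rightarrow> real^'n \<Rightarrow> (real^'n) set set" where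
  "fan_simplices P tri w =
     (if aff_dim P = 0 then {{w}}
      else {insert w D | D F. F facet_of P \<and> w \<notin> F \<and> D \<in> tri F})"

definition fan_coeffs ::
  "(real^'n) set \<Rightarrow> ((real^'n) set \<Rightarrow> (real^'n) set set) \<Rightarrow> real^'n
     \<Rightarrow> (real^'n \<Rightarrow> real^'n \<Rightarrow> real) \<Rightarrow> bool" where
  "fan_coeffs P tri w g \<longleftrightarrow>
     (\<forall>p\<in>P. \<exists>S\<in>fan_simplices P tri w.
        p \<in> convex hull S \<and>
        (\<forall>v\<in>verts P - S. g v p = 0) \<and>
        (\<forall>v\<in>S. 0 \<le> g v p) \<and>
        (\<Sum>v\<in>S. g v p) = 1 \<and>
        (\<Sum>v\<in>S. g v p *\<^sub>R v) = p)"

definition open_face :: "'n set \<Rightarrow> 'n set \<Rightarrow> 'n set \<Rightarrow> (real^'n) set" where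
  "open_face A S B = {p. (\<forall>i\<in>A. p$i = 0) \<and> (\<forall>i\<in>S. 0 < p$i \<and> p$i < 1) \<and>
                         (\<forall>i\<in>B. p$i = 1) \<and> (\<forall>i. 0 \<le> p$i \<and> p$i \<le> 1)}"

definition poly_bounded :: "(real^'n::finite) set \<Rightarrow> (real^'n \<Rightarrow> real) \<Rightarrow> bool" where
  "poly_bounded P h \<longleftrightarrow>
     (\<forall>p\<in>P. 0 \<le> h p \<and> h p \<le> 1) \<and>
     (\<exists>m::nat. \<exists>c::real. c > 0 \<and>
        (\<forall>A S B. A \<inter> S = {} \<and> A \<inter> B = {} \<and> S \<inter> B = {} \<and> A \<union> S \<union> B = UNIV \<longrightarrow>
           (\<exists>q\<in>P \<inter> open_face A S B. h q > 0) \<longrightarrow>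
           (\<forall>p\<in>P. h p \<ge> c * ((\<Prod>i\<in>A. 1 - p$i) * (\<Prod>i\<in>S. p$i) *
                                 (\<Prod>i\<in>S. 1 - p$i) * (\<Prod>i\<in>B. p$i)) ^ m)))"

end

theory Submission
  imports Defs
begin

(* In the fan triangulation T_v, a point p of P is c v + (1 - c) x with c = g_v^(v)(p) and x in
   a facet F not containing v.  Some coordinate i has x_i \<in> {0, 1} and v_i \<noteq> x_i: otherwise x
   could be pushed slightly beyond itself, away from v, without leaving P, so x would lie in an
   open segment from v to a point of P, and the face F would contain v.  Hence c \<ge> p_i (if
   x_i = 0) or c \<ge> 1 - p_i (if x_i = 1).
   If f_v(q) > 0 for some q in the open face F_{A,S,B}, then v has positive weight in a simplex
   containing q, which forces v_i = 0 on A and v_i = 1 on B.  So the index i above lies outside A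
   (resp. B), and p_i (resp. 1 - p_i) dominates (1-p)^A p^S (1-p)^S p^B.  Altogether
   f_v \<ge> g_v^(v) / |V| \<ge> (1-p)^A p^S (1-p)^S p^B / |V|, i.e. m = 1 and c = 1 / |V|. *)

lemma weighted_sum_nonneg_eq_0_imp:
  fixes c f :: "'a \<Rightarrow> real"
  assumes "finite S" "\<And>u. u \<in> S \<Longrightarrow> 0 \<le> c u" "\<And>u. u \<in> S \<Longrightarrow> 0 \<le> f u"
    and "(\<Sum>u\<in>S. c u * f u) = 0" "v \<in> S" "0 < c v"
  shows "f v = 0"
proof -
  have "\<forall>u\<in>S. c u * f u = 0"
    using assms(4) sum_nonneg_eq_0_iff[OF assms(1), of "\<lambda>u. c u * f u"] assms(2,3) by simp
  then show ?thesis
    using assms(5,6) by fastforce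
qed

lemma prod_unit_interval_le_factor:
  fixes f :: "'a \<Rightarrow> real"
  assumes "finite I" "i \<in> I" "\<And>j. j \<in> I \<Longrightarrow> 0 \<le> f j \<and> f j \<le> 1"
  shows "prod f I \<le> f i"
proof -
  have "prod f I = f i * prod f (I - {i})"
    using assms by (simp add: prod.remove)
  moreover have "prod f (I - {i}) \<le> 1"
    using assms by (auto intro: prod_le_1)
  ultimately show ?thesis
    using assms by (simp add: mult_left_le)
qed

lemma mean_unit_interval:
  fixes f :: "'a \<Rightarrow> real"
  assumes "finite V" "V \<noteq> {}" "\<And>w. w \<in> V \<Longrightarrow> 0 \<le> f w \<and> f w \<le> 1"
  shows "0 \<le> 1 / card V * sum f V \<and> 1 / card V * sum f V \<le> 1"
proof -
  have "0 \<le> sum f V" "sum f V \<le> card V"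
    using assms(3) sum_bounded_above[of V f 1] by (auto intro: sum_nonneg)
  then show ?thesis
    using assms(1,2) by (auto simp: field_simps card_gt_0_iff)
qed

lemma convex_comb_insert_decompose:
  fixes F :: "'a::real_vector set"
  assumes F: "convex F" "finite D" "D \<subseteq> F" "v \<notin> D"
    and c: "\<And>u. u \<in> insert v D \<Longrightarrow> 0 \<le> c u" "(\<Sum>u\<in>insert v D. c u) = 1" "c v \<noteq> 1"
  shows "\<exists>x\<in>F. (\<Sum>u\<in>insert v D. c u *\<^sub>R u) = c v *\<^sub>R v + (1 - c v) *\<^sub>R x"
proof
  have t: "sum c D = 1 - c v" "0 < sum c D"
    using F c by (auto simp: less_le intro: sum_nonneg)
  define x where "x = (\<Sum>u\<in>D. (c u / sum c D) *\<^sub>R u)"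
  show "x \<in> F"
    unfolding x_def using F c t
    by (intro convex_sum) (auto simp: sum_divide_distrib[symmetric])
  have "(1 - c v) *\<^sub>R x = (\<Sum>u\<in>D. c u *\<^sub>R u)"
    using t by (simp add: x_def scaleR_sum_right)
  then show "(\<Sum>u\<in>insert v D. c u *\<^sub>R u) = c v *\<^sub>R v + (1 - c v) *\<^sub>R x"
    using F by simp
qed

lemma cube_poly_eq: "cube_poly K = cbox 0 1 \<inter> K"
  by (auto simp: cube_poly_def mem_box_cart)

lemma finite_verts_cube_poly:
  fixes K :: "(real^'n::finite) set"
  assumes "affine K"
  shows "finite (verts (cube_poly K))"
  unfolding verts_def cube_poly_eq
  by (intro finite_polyhedron_extreme_points polyhedron_Int polyhedron_interval affine_imp_polyhedron assms)

lemma convex_comb_tight_coord: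
  fixes q :: "real^'n::finite"
  assumes S: "finite S" "S \<subseteq> cbox 0 1"
    and c: "\<And>u. u \<in> S \<Longrightarrow> 0 \<le> c u" "sum c S = 1" "(\<Sum>u\<in>S. c u *\<^sub>R u) = q"
    and v: "v \<in> S" "0 < c v" and tight: "q$i \<in> {0, 1}"
  shows "v$i = q$i"
proof -
  have q_coord: "q$i = (\<Sum>u\<in>S. c u * u$i)"
    using c(3) by auto
  have cube: "0 \<le> u$i" "0 \<le> 1 - u$i" if "u \<in> S" for u
    using S(2) that by (auto simp: mem_box_cart)
  from tight consider "q$i = 0" | "q$i = 1" by blast
  then show ?thesis
  proof cases
    case 1
    then have "(\<Sum>u\<in>S. c u * u$i) = 0"
      using q_coord by simp
    then show ?thesis
      using weighted_sum_nonneg_eq_0_imp[of S c "\<lambda>u. u$i" v] S(1) c(1) cube(1) v 1 by simp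
  next
    case 2
    have "(\<Sum>u\<in>S. c u * (1 - u$i)) = sum c S - (\<Sum>u\<in>S. c u * u$i)"
      by (simp add: right_diff_distrib sum_subtractf)
    also have "\<dots> = 0"
      using c(2) q_coord 2 by simp
    finally have "(\<Sum>u\<in>S. c u * (1 - u$i)) = 0" .
    then show ?thesis
      using weighted_sum_nonneg_eq_0_imp[of S c "\<lambda>u. 1 - u$i" v] S(1) c(1) cube(2) v 2 by simp
  qed
qed

lemma cube_extend_beyond:
  fixes x v :: "real^'n::finite"
  assumes x: "x \<in> cbox 0 1" and v: "v \<in> cbox 0 1"
    and tight: "\<And>i. x$i \<in> {0, 1} \<Longrightarrow> v$i = x$i"
  shows "\<exists>\<epsilon>>0. x + \<epsilon> *\<^sub>R (x - v) \<in> cbox 0 1"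
proof -
  have coord: "\<forall>\<^sub>F \<epsilon> in at_right 0. 0 \<le> (x + \<epsilon> *\<^sub>R (x - v))$j \<and> (x + \<epsilon> *\<^sub>R (x - v))$j \<le> 1" for j
  proof (cases "x$j \<in> {0, 1}")
    case True
    then show ?thesis using tight[OF True] by (auto intro: always_eventually)
  next
    case False
    then have "0 < x$j" "x$j < 1" using x by (auto simp: mem_box_cart less_le)
    moreover have "((\<lambda>\<epsilon>. (x + \<epsilon> *\<^sub>R (x - v))$j) \<longlongrightarrow> x$j) (at_right 0)"
      by (auto intro!: tendsto_eq_intros)
    ultimately have "\<forall>\<^sub>F \<epsilon> in at_right 0. 0 < (x + \<epsilon> *\<^sub>R (x - v))$j \<and> (x + \<epsilon> *\<^sub>R (x - v))$j < 1"
      by (intro eventually_conj order_tendstoD)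
    then show ?thesis
      by (rule eventually_mono) simp
  qed
  have "\<forall>\<^sub>F \<epsilon> in at_right 0. 0 < \<epsilon> \<and> x + \<epsilon> *\<^sub>R (x - v) \<in> cbox 0 1"
    using eventually_conj[OF eventually_at_right_less eventually_all_finite[OF coord]]
    by (simp add: mem_box_cart)
  then show ?thesis
    using eventually_happens'[OF trivial_limit_at_right_real] by blast
qed

lemma face_of_cube_poly_separating_coord:
  fixes K :: "(real^'n::finite) set"
  assumes K: "affine K" and F: "F face_of cube_poly K"
    and v: "v \<in> cube_poly K" "v \<notin> F" and x: "x \<in> F"
  shows "\<exists>i. x$i \<in> {0, 1} \<and> v$i \<noteq> x$i"
proof (rule ccontr)
  assume "\<not> ?thesis"
  then have tight: "x$i \<in> {0, 1} \<Longrightarrow> v$i = x$i" for i by blast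
  have xP: "x \<in> cube_poly K" using F x face_of_imp_subset by blast
  obtain \<epsilon> where "\<epsilon> > 0" and y_cube: "x + \<epsilon> *\<^sub>R (x - v) \<in> cbox 0 1"
    using cube_extend_beyond[OF _ _ tight] xP v by (auto simp: cube_poly_eq)
  define y where "y = x + \<epsilon> *\<^sub>R (x - v)"
  have "(1 + \<epsilon>) *\<^sub>R x + (- \<epsilon>) *\<^sub>R v \<in> K"
    using xP v by (intro mem_affine[OF K]) (auto simp: cube_poly_eq)
  then have "y \<in> K"
    by (simp add: y_def algebra_simps)
  then have yP: "y \<in> cube_poly K"
    using y_cube by (simp add: cube_poly_eq y_def)
  define u where "u = 1 / (1 + \<epsilon>)"
  have "u * (1 + \<epsilon>) = 1" "0 < u" "u < 1"
    using \<open>\<epsilon> > 0\<close> by (auto simp: u_def)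
  moreover have "(1 - u) *\<^sub>R v + u *\<^sub>R y = v + (u * (1 + \<epsilon>)) *\<^sub>R (x - v)"
    by (simp add: y_def algebra_simps)
  moreover have "x \<noteq> v" "x \<noteq> y"
    using x v \<open>\<epsilon> > 0\<close> by (auto simp: y_def)
  ultimately have "x \<in> open_segment v y"
    by (auto simp: in_segment)
  then show False
    using face_ofD[OF F _ v(1) yP x] v(2) by blast
qed

definition face_monomial :: "'n set \<Rightarrow> 'n set \<Rightarrow> 'n set \<Rightarrow> real^'n \<Rightarrow> real" where
  "face_monomial A S B p =
     (\<Prod>i\<in>A. 1 - p$i) * (\<Prod>i\<in>S. p$i) * (\<Prod>i\<in>S. 1 - p$i) * (\<Prod>i\<in>B. p$i)"

lemma face_monomial_eq:
  fixes p :: "real^'n::finite"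
  assumes "A \<inter> S = {}" "A \<inter> B = {}" "S \<inter> B = {}" "A \<union> S \<union> B = UNIV"
  shows "face_monomial A S B p = (\<Prod>i\<in>-B. 1 - p$i) * (\<Prod>i\<in>-A. p$i)"
proof -
  have "-B = A \<union> S" "-A = S \<union> B"
    using assms by auto
  then show ?thesis
    using assms by (simp add: face_monomial_def prod.union_disjoint ac_simps)
qed

lemma face_monomial_le:
  fixes p :: "real^'n::finite"
  assumes part: "A \<inter> S = {}" "A \<inter> B = {}" "S \<inter> B = {}" "A \<union> S \<union> B = UNIV"
    and p: "p \<in> cbox 0 1"
  shows face_monomial_le_1: "face_monomial A S B p \<le> 1"
    and face_monomial_le_coord: "i \<notin> A \<Longrightarrow> face_monomial A S B p \<le> p$i"
    and face_monomial_le_one_minus_coord: "i \<notin> B \<Longrightarrow> face_monomial A S B p \<le> 1 - p$i"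
proof -
  have unit: "0 \<le> p$j" "p$j \<le> 1" for j
    using p by (auto simp: mem_box_cart)
  define a where "a = (\<Prod>i\<in>-B. 1 - p$i)"
  define b where "b = (\<Prod>i\<in>-A. p$i)"
  have ab: "0 \<le> a" "a \<le> 1" "0 \<le> b" "b \<le> 1"
    using unit by (auto simp: a_def b_def intro: prod_nonneg prod_le_1)
  have m: "face_monomial A S B p = a * b"
    using face_monomial_eq[OF part] by (simp add: a_def b_def)
  have "a * b \<le> a" "a * b \<le> b"
    using ab by (auto simp: mult_left_le mult_left_le_one_le)
  then show "face_monomial A S B p \<le> 1"
    using m ab by linarith
  show "face_monomial A S B p \<le> p$i" if "i \<notin> A"
    using prod_unit_interval_le_factor[of "-A" i "\<lambda>i. p$i"] that unit m \<open>a * b \<le> b\<close>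
    by (simp add: b_def)
  show "face_monomial A S B p \<le> 1 - p$i" if "i \<notin> B"
    using prod_unit_interval_le_factor[of "-B" i "\<lambda>i. 1 - p$i"] that unit m \<open>a * b \<le> a\<close>
    by (simp add: a_def)
qed

lemma apex_coeff_ge_face_monomial:
  fixes K :: "(real^'n::finite) set"
  assumes K: "affine K" and F: "F face_of cube_poly K" and v: "v \<in> cube_poly K" "v \<notin> F"
    and D: "finite D" "D \<subseteq> F"
    and c: "\<And>u. u \<in> insert v D \<Longrightarrow> 0 \<le> c u" "(\<Sum>u\<in>insert v D. c u) = 1"
      "(\<Sum>u\<in>insert v D. c u *\<^sub>R u) = p"
    and part: "A \<inter> S = {}" "A \<inter> B = {}" "S \<inter> B = {}" "A \<union> S \<union> B = UNIV"
    and p: "p \<in> cbox 0 1"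
    and tight: "\<And>i. i \<in> A \<Longrightarrow> v$i = 0" "\<And>i. i \<in> B \<Longrightarrow> v$i = 1"
  shows "face_monomial A S B p \<le> c v"
proof (cases "c v = 1")
  case True
  then show ?thesis
    using face_monomial_le_1[OF part p] by simp
next
  case False
  have "v \<notin> D"
    using D v by blast
  then obtain x where x: "x \<in> F" "p = c v *\<^sub>R v + (1 - c v) *\<^sub>R x"
    using convex_comb_insert_decompose[OF face_of_imp_convex[OF F] D _ c(1,2) False] c(3) by auto
  obtain i where i: "x$i \<in> {0, 1}" "v$i \<noteq> x$i"
    using face_of_cube_poly_separating_coord[OF K F v x(1)] by blast
  have p_i: "p$i = c v * v$i + (1 - c v) * x$i"
    using x(2) by simp
  have "0 \<le> c v" "0 \<le> v$i" "v$i \<le> 1"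
    using c(1) v by (auto simp: cube_poly_eq mem_box_cart)
  from i(1) consider "x$i = 0" | "x$i = 1" by blast
  then show ?thesis
  proof cases
    case 1
    then have "i \<notin> A" "p$i \<le> c v"
      using i(2) tight(1) p_i \<open>0 \<le> c v\<close> \<open>v$i \<le> 1\<close> by (auto simp: mult_left_le)
    then show ?thesis
      using face_monomial_le_coord[OF part p] by (meson order_trans)
  next
    case 2
    then have "i \<notin> B" "1 - p$i = c v * (1 - v$i)"
      using i(2) tight(2) p_i by (auto simp: algebra_simps)
    moreover have "c v * (1 - v$i) \<le> c v"
      using \<open>0 \<le> c v\<close> \<open>0 \<le> v$i\<close> by (simp add: mult_left_le)
    ultimately show ?thesis
      using face_monomial_le_one_minus_coord[OF part p] by (metis order_trans)
  qed
qed

lemma verts_subset: "verts P \<subseteq> P"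
  by (auto simp: verts_def extreme_point_of_def)

lemma facet_triangulation_simplex_subset:
  assumes "facet_triangulation P F T" "D \<in> T"
  shows "D \<subseteq> verts P \<inter> F"
  using assms unfolding facet_triangulation_def by blast

lemma fan_simplicesE:
  assumes "S \<in> fan_simplices P tri w"
  obtains "aff_dim P = 0" "S = {w}"
    | D F where "aff_dim P \<noteq> 0" "S = insert w D" "F facet_of P" "w \<notin> F" "D \<in> tri F"
  using assms unfolding fan_simplices_def by (auto split: if_splits)

lemma fan_simplex_subset_verts:
  assumes w: "w \<in> verts P"
    and tri: "\<And>F. F facet_of P \<Longrightarrow> w \<notin> F \<Longrightarrow> facet_triangulation P F (tri F)"
    and S: "S \<in> fan_simplices P tri w"
  shows "S \<subseteq> verts P"
  using S
proof (cases rule: fan_simplicesE)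
  case 1
  then show ?thesis using w by simp
next
  case (2 D F)
  then show ?thesis
    using w facet_triangulation_simplex_subset[OF tri[of F]] by blast
qed

lemma fan_coeffsE:
  assumes "fan_coeffs P tri w g" "p \<in> P"
  obtains S where "S \<in> fan_simplices P tri w" "finite S"
    "\<And>v. v \<in> verts P - S \<Longrightarrow> g v p = 0" "\<And>v. v \<in> S \<Longrightarrow> 0 \<le> g v p"
    "(\<Sum>v\<in>S. g v p) = 1" "(\<Sum>v\<in>S. g v p *\<^sub>R v) = p"
proof -
  obtain S where S: "S \<in> fan_simplices P tri w" "\<forall>v\<in>verts P - S. g v p = 0"
    "\<forall>v\<in>S. 0 \<le> g v p" "(\<Sum>v\<in>S. g v p) = 1" "(\<Sum>v\<in>S. g v p *\<^sub>R v) = p"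
    using assms unfolding fan_coeffs_def by blast
  moreover have "finite S"
    using S(4) sum.infinite by fastforce
  ultimately show ?thesis
    using that by blast
qed

lemma fan_coeffs_unit_interval:
  assumes "fan_coeffs P tri w g" "p \<in> P" "v \<in> verts P"
  shows "0 \<le> g v p \<and> g v p \<le> 1"
proof -
  obtain S where S: "S \<in> fan_simplices P tri w" "finite S"
    "\<And>v. v \<in> verts P - S \<Longrightarrow> g v p = 0" "\<And>v. v \<in> S \<Longrightarrow> 0 \<le> g v p"
    "(\<Sum>v\<in>S. g v p) = 1" "(\<Sum>v\<in>S. g v p *\<^sub>R v) = p"
    using fan_coeffsE[OF assms(1,2)] by blast
  show ?thesis
  proof (cases "v \<in> S")
    case True
    then have "g v p \<le> (\<Sum>v\<in>S. g v p)"
      using S(2,4) by (intro member_le_sum) auto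
    then show ?thesis
      using True S(4,5) by simp
  next
    case False
    then show ?thesis
      using S(3) assms(3) by simp
  qed
qed

lemma fan_coeff_pos_imp_tight:
  assumes P: "P \<subseteq> cbox 0 1" and w: "w \<in> verts P"
    and tri: "\<And>F. F facet_of P \<Longrightarrow> w \<notin> F \<Longrightarrow> facet_triangulation P F (tri F)"
    and g: "fan_coeffs P tri w g" and q: "q \<in> P"
    and v: "v \<in> verts P" "0 < g v q" and tight: "q$i \<in> {0, 1}"
  shows "v$i = q$i"
proof -
  obtain S where S: "S \<in> fan_simplices P tri w" "finite S"
    "\<And>v. v \<in> verts P - S \<Longrightarrow> g v q = 0" "\<And>v. v \<in> S \<Longrightarrow> 0 \<le> g v q"
    "(\<Sum>v\<in>S. g v q) = 1" "(\<Sum>v\<in>S. g v q *\<^sub>R v) = q"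
    using fan_coeffsE[OF g q] by blast
  have "S \<subseteq> cbox 0 1"
    using fan_simplex_subset_verts[OF w tri S(1)] verts_subset P by blast
  moreover have "v \<in> S"
    using S(3)[of v] v by auto
  ultimately show ?thesis
    using convex_comb_tight_coord[OF S(2) _ S(4-6) _ v(2) tight] by blast
qed

lemma fan_apex_coeff_ge_face_monomial:
  fixes K :: "(real^'n::finite) set"
  assumes K: "affine K" and v: "v \<in> verts (cube_poly K)"
    and tri: "\<And>F. F facet_of cube_poly K \<Longrightarrow> v \<notin> F \<Longrightarrow>
                facet_triangulation (cube_poly K) F (tri F)"
    and g: "fan_coeffs (cube_poly K) tri v g" and p: "p \<in> cube_poly K"
    and part: "A \<inter> S = {}" "A \<inter> B = {}" "S \<inter> B = {}" "A \<union> S \<union> B = UNIV"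
    and tight: "\<And>i. i \<in> A \<Longrightarrow> v$i = 0" "\<And>i. i \<in> B \<Longrightarrow> v$i = 1"
  shows "face_monomial A S B p \<le> g v p"
proof -
  have p_cube: "p \<in> cbox 0 1"
    using p by (simp add: cube_poly_eq)
  obtain U where U: "U \<in> fan_simplices (cube_poly K) tri v" "finite U"
    "\<And>u. u \<in> verts (cube_poly K) - U \<Longrightarrow> g u p = 0" "\<And>u. u \<in> U \<Longrightarrow> 0 \<le> g u p"
    "(\<Sum>u\<in>U. g u p) = 1" "(\<Sum>u\<in>U. g u p *\<^sub>R u) = p"
    using fan_coeffsE[OF g p] by blast
  from U(1) show ?thesis
  proof (cases rule: fan_simplicesE)
    case 1
    then show ?thesis
      using U(5) face_monomial_le_1[OF part p_cube] by simp
  next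
    case (2 D F)
    have D: "finite D" "D \<subseteq> F"
      using U(2) 2 facet_triangulation_simplex_subset[OF tri[of F]] by auto
    have F: "F face_of cube_poly K"
      using 2(3) facet_of_imp_face_of by blast
    have "v \<in> cube_poly K"
      using v verts_subset by blast
    from apex_coeff_ge_face_monomial[OF K F this 2(4) D U(4-6)[unfolded 2(2)] part p_cube tight]
    show ?thesis .
  qed
qed

lemma face_monomial_le_apex_coeff:
  fixes K :: "(real^'n::finite) set"
  assumes K: "affine K" and v: "v \<in> verts (cube_poly K)"
    and tri: "\<And>u F. u \<in> verts (cube_poly K) \<Longrightarrow> F facet_of cube_poly K \<Longrightarrow> u \<notin> F \<Longrightarrow>
                facet_triangulation (cube_poly K) F (tri u F)"
    and g: "\<And>u. u \<in> verts (cube_poly K) \<Longrightarrow> fan_coeffs (cube_poly K) (tri u) u (g u)"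
    and part: "A \<inter> S = {}" "A \<inter> B = {}" "S \<inter> B = {}" "A \<union> S \<union> B = UNIV"
    and q: "q \<in> cube_poly K \<inter> open_face A S B" "0 < (\<Sum>w\<in>verts (cube_poly K). g w v q)"
    and p: "p \<in> cube_poly K"
  shows "face_monomial A S B p \<le> g v v p"
proof -
  obtain w where w: "w \<in> verts (cube_poly K)" "0 < g w v q"
    using q(2) sum_nonpos[of "verts (cube_poly K)" "\<lambda>w. g w v q"] by (meson not_le)
  have tight: "v$i = q$i" if "q$i \<in> {0, 1}" for i
    using fan_coeff_pos_imp_tight[OF _ w(1) tri[OF w(1)] g[OF w(1)] _ v w(2) that] q(1)
    by (auto simp: cube_poly_eq)
  have "v$i = 0" if "i \<in> A" for i
    using tight[of i] q(1) that by (auto simp: open_face_def)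
  moreover have "v$i = 1" if "i \<in> B" for i
    using tight[of i] q(1) that by (auto simp: open_face_def)
  ultimately show ?thesis
    using fan_apex_coeff_ge_face_monomial[OF K v tri[OF v] g[OF v] p part] by blast
qed

lemma poly_boundedI:
  fixes P :: "(real^'n::finite) set"
  assumes "\<And>p. p \<in> P \<Longrightarrow> 0 \<le> h p \<and> h p \<le> 1" and "0 < c"
    and "\<And>A S B q p. A \<inter> S = {} \<Longrightarrow> A \<inter> B = {} \<Longrightarrow> S \<inter> B = {} \<Longrightarrow> A \<union> S \<union> B = UNIV \<Longrightarrow>
           q \<in> P \<inter> open_face A S B \<Longrightarrow> 0 < h q \<Longrightarrow> p \<in> P \<Longrightarrow> c * face_monomial A S B p \<le> h p"
  shows "poly_bounded P h"
proof -
  have "\<forall>A S B. A \<inter> S = {} \<and> A \<inter> B = {} \<and> S \<inter> B = {} \<and> A \<union> S \<union> B = UNIV \<longrightarrow>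
          (\<exists>q\<in>P \<inter> open_face A S B. h q > 0) \<longrightarrow>
          (\<forall>p\<in>P. h p \<ge> c * ((\<Prod>i\<in>A. 1 - p$i) * (\<Prod>i\<in>S. p$i) *
                                (\<Prod>i\<in>S. 1 - p$i) * (\<Prod>i\<in>B. p$i)) ^ 1)"
    using assms(3) by (auto simp: face_monomial_def)
  then show ?thesis
    unfolding poly_bounded_def using assms(1,2) by blast
qed

theorem lemma14:
  fixes K :: "(real^'n::finite) set"
    and tri :: "real^'n \<Rightarrow> (real^'n) set \<Rightarrow> (real^'n) set set"
    and g :: "real^'n \<Rightarrow> real^'n \<Rightarrow> real^'n \<Rightarrow> real"
    and v :: "real^'n"
  assumes "affine K"
    and "\<forall>w\<in>verts (cube_poly K). \<forall>F. F facet_of cube_poly K \<and> w \<notin> F \<longrightarrow>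
           facet_triangulation (cube_poly K) F (tri w F)"
    and "\<forall>w\<in>verts (cube_poly K). fan_coeffs (cube_poly K) (tri w) w (g w)"
    and "v \<in> verts (cube_poly K)"
  shows "poly_bounded (cube_poly K)
           (\<lambda>p. (1 / real (card (verts (cube_poly K)))) *
                (\<Sum>w\<in>verts (cube_poly K). g w v p))"
proof -
  let ?P = "cube_poly K" and ?V = "verts (cube_poly K)"
  have tri: "\<And>w F. w \<in> ?V \<Longrightarrow> F facet_of ?P \<Longrightarrow> w \<notin> F \<Longrightarrow> facet_triangulation ?P F (tri w F)"
    and g: "\<And>w. w \<in> ?V \<Longrightarrow> fan_coeffs ?P (tri w) w (g w)"
    using assms(2,3) by blast+
  have V: "finite ?V" "?V \<noteq> {}"
    using finite_verts_cube_poly[OF assms(1)] assms(4) by auto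
  have unit: "0 \<le> g w v p \<and> g w v p \<le> 1" if "w \<in> ?V" "p \<in> ?P" for w p
    using fan_coeffs_unit_interval[OF g] that assms(4) by blast
  show ?thesis
  proof (rule poly_boundedI)
    show "0 \<le> 1 / card ?V * (\<Sum>w\<in>?V. g w v p) \<and> 1 / card ?V * (\<Sum>w\<in>?V. g w v p) \<le> 1"
      if "p \<in> ?P" for p
      by (rule mean_unit_interval[OF V unit[OF _ that]])
  next
    fix A S B q p
    assume part: "A \<inter> S = {}" "A \<inter> B = {}" "S \<inter> B = {}" "A \<union> S \<union> B = UNIV"
      and q: "q \<in> ?P \<inter> open_face A S B" "0 < 1 / card ?V * (\<Sum>w\<in>?V. g w v q)" and p: "p \<in> ?P"
    have "0 < (\<Sum>w\<in>?V. g w v q)"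
      using q(2) V by (simp add: zero_less_divide_iff)
    from face_monomial_le_apex_coeff[OF assms(1,4) tri g part q(1) this p]
    have "face_monomial A S B p \<le> g v v p" .
    also have "\<dots> \<le> (\<Sum>w\<in>?V. g w v p)"
      using V unit p assms(4) by (intro member_le_sum) auto
    finally show "1 / card ?V * face_monomial A S B p \<le> 1 / card ?V * (\<Sum>w\<in>?V. g w v p)"
      by (simp add: divide_right_mono)
  qed (use V in \<open>simp add: card_gt_0_iff\<close>)
qed

end
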